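(* Fix an instance of MCND and a partial aggregation $\mathcal{B}$ (see context). (i) If $(x,y,z)$ is a feasible solution of the LP relaxation of the PAe formulation built on $\mathcal{B}$, then $(x,y)$ is a feasible solution of the LP relaxation of the PAi formulation built on the same $\mathcal{B}$ (with the same objective value). (ii) The converse fails in general: there exist an instance and a partial aggregation $\mathcal{B}$ for which the LP relaxation of PAi has a feasible solution $(x,y)$ such that there is no $z$ making $(x,y,z)$ feasible for the LP relaxation of PAe. (That is, PAe is stronger than PAi.)
   Context: An instance of MCND consists of a directed graph $G=(\mathcal{N},\mathcal{A})$, a finite set $\mathcal{K}$ of commodities, each $k\in\mathcal{K}$ having an origin $o^k\in\mathcal{N}$, a destination $s^k\in\mathcal{N}$ and a demand $d^k\ge 0$, and for each arc $(i,j)\in\mathcal{A}$ a capacity $u_{ij}$, a per-unit flow cost $c_{ij}$ and a fixed cost $f_{ij}$, all nonnegative. Let $o_i^k=1$ if $i=o^k$ and $0$ otherwise, $s_i^k=1$ if $i=s^k$ and $0$ otherwise, $\mathcal{N}_i^+=\{j:(i,j)\in\mathcal{A}\}$, $\mathcal{N}_i^-=\{j:(j,i)\in\mathcal{A}\}$. Dispersion: a nonempty set $\mathcal{K}_b\subseteq\mathcal{K}$ of commodities sharing a common origin, together with, for every arc $(i,j)\in\mathcal{A}$, a partition of $\mathcal{K}_b$ into $\mathcal{K}_b^{ij}$ (aggregated on $(i,j)$) and $\mathcal{D}_b^{ij}$ (disaggregated on $(i,j)$); either part may be empty. Let $\mathcal{G}_b^{ij}$ be the family consisting of the set $\mathcal{K}_b^{ij}$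 (if nonempty) together with the singletons $\{k\}$, $k\in\mathcal{D}_b^{ij}$. A partial aggregation is a set $\mathcal{B}$ of dispersions such that every $k\in\mathcal{K}$ lies in $\mathcal{K}_b$ for exactly one $b\in\mathcal{B}$. LP relaxation of PA (for $\mathcal{B}$): variables $x_{ij}^D\ge0$ for $(i,j)\in\mathcal{A}$, $b\in\mathcal{B}$, $D\in\mathcal{G}_b^{ij}$ (since the $\mathcal{K}_b$ are disjoint, $D$ determines $b$), and $0\le y_{ij}\le1$; minimize $\sum_{(i,j)}c_{ij}\sum_{b}\sum_{D\in\mathcal{G}_b^{ij}}x_{ij}^D+\sum_{(i,j)}f_{ij}y_{ij}$ subject to: for all $b\in\mathcal{B}$, $i\in\mathcal{N}$: $\sum_{j\in\mathcal{N}_i^+}\sum_{D\in\mathcal{G}_b^{ij}}x_{ij}^D-\sum_{j\in\mathcal{N}_i^-}\sum_{D\in\mathcal{G}_b^{ji}}x_{ji}^D=\sum_{k\in\mathcal{K}_b}(o_i^k-s_i^k)d^k$; for all $(i,j)$: $\sum_b\sum_{D\in\mathcal{G}_b^{ij}}x_{ij}^D\le u_{ij}y_{ij}$; for all $(i,j),b,D\in\mathcal{G}_b^{ij}$: $x_{ij}^D\le(\sum_{k\in D}d^k)y_{ij}$. LP relaxation of PAi: the PA LP plus, for all $b\in\mathcal{B}$, $k\in\mathcal{K}_b$, $i\in\mathcal{N}$: $\sum_{j\in\mathcal{N}_i^+}\sum_{D\in\mathcal{G}_b^{ij}:k\in D}x_{ij}^D-\sum_{j\in\mathcal{N}_i^-}\sum_{D\in\mathcal{G}_b^{ji}:D=\{k\}}x_{ji}^D\ge(o_i^k-s_i^k)d^k$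 and $\sum_{j\in\mathcal{N}_i^+}\sum_{D\in\mathcal{G}_b^{ij}:D=\{k\}}x_{ij}^D-\sum_{j\in\mathcal{N}_i^-}\sum_{D\in\mathcal{G}_b^{ji}:k\in D}x_{ji}^D\le(o_i^k-s_i^k)d^k$. LP relaxation of PAe: the PA LP plus the following. For $b\in\mathcal{B}$, $i\in\mathcal{N}$ let $\mathcal{L}_b^i=\{k\in\mathcal{K}_b:k\in\mathcal{D}_b^{ji}\text{ for some }j\in\mathcal{N}_i^-\text{ or }k\in\mathcal{D}_b^{ij}\text{ for some }j\in\mathcal{N}_i^+\}$; $\mathcal{M}_b^i=\{\{k\}:k\in\mathcal{L}_b^i\}\cup\{\mathcal{K}_b\setminus\mathcal{L}_b^i\}$ (the last set only if nonempty); $\check{\mathcal{T}}_b^i$ = the set of distinct nonempty sets among $\{\mathcal{K}_b^{ji}:j\in\mathcal{N}_i^-\}$; $\hat{\mathcal{T}}_b^i$ = the set of distinct nonempty sets among $\{\mathcal{K}_b^{ij}:j\in\mathcal{N}_i^+\}$. For every $(b,i)$ with $\mathcal{L}_b^i\neq\emptyset$ add variables $z_{CD}^{ib}\ge0$ for $C\in\check{\mathcal{T}}_b^i$, $D\in\mathcal{M}_b^i$ with $C\cap D\ne\emptyset$, and $z_{DC}^{ib}\ge0$ for $D\in\mathcal{M}_b^i$, $C\in\hat{\mathcal{T}}_b^i$ with $C\cap D\neq\emptyset$ (zero cost), and constraints: for each $D\in\mathcal{M}_b^i$: $\sum_{j\in\mathcal{N}_i^+:\,D=\{k\},k\in\mathcal{D}_b^{ij}}x_{ij}^{D}-\sum_{j\in\mathcal{N}_i^-:\,D=\{k\},k\in\mathcal{D}_b^{ji}}x_{ji}^{D}+\sum_{C\in\hat{\mathcal{T}}_b^i:C\cap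 D\neq\emptyset}z_{DC}^{ib}-\sum_{C\in\check{\mathcal{T}}_b^i:C\cap D\ne\emptyset}z_{CD}^{ib}=\sum_{k\in D}(o_i^k-s_i^k)d^k$; for each $C\in\check{\mathcal{T}}_b^i$: $\sum_{D\in\mathcal{M}_b^i:C\cap D\ne\emptyset}z_{CD}^{ib}-\sum_{j\in\mathcal{N}_i^-:\mathcal{K}_b^{ji}=C}x_{ji}^C=0$; for each $C\in\hat{\mathcal{T}}_b^i$: $\sum_{j\in\mathcal{N}_i^+:\mathcal{K}_b^{ij}=C}x_{ij}^C-\sum_{D\in\mathcal{M}_b^i:C\cap D\neq\emptyset}z_{DC}^{ib}=0$. The objective is that of PA. *)

theory Defs
  imports "HOL-Analysis.Analysis"
begin

record ('n, 'k) mcnd =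
  nodes :: "'n set"
  arcs  :: "('n \<times> 'n) set"
  comms :: "'k set"
  orig  :: "'k \<Rightarrow> 'n"
  dest  :: "'k \<Rightarrow> 'n"
  dem   :: "'k \<Rightarrow> real"
  cap   :: "'n \<times> 'n \<Rightarrow> real"
  ucost :: "'n \<times> 'n \<Rightarrow> real"
  fcost :: "'n \<times> 'n \<Rightarrow> real"

definition mcnd_instance :: "('n, 'k) mcnd \<Rightarrow> bool" where
  "mcnd_instance I \<longleftrightarrow>
     finite (nodes I) \<and> arcs I \<subseteq> nodes I \<times> nodes I \<and> (\<forall>(i,j)\<in>arcs I. i \<noteq> j) \<and>
     finite (comms I) \<and>
     (\<forall>k\<in>comms I. orig I k \<in> nodes I \<and> dest I k \<in> nodes I \<and> dem I k \<ge> 0) \<and>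
     (\<forall>a\<in>arcs I. cap I a \<ge> 0 \<and> ucost I a \<ge> 0 \<and> fcost I a \<ge> 0)"

definition netdem :: "('n, 'k) mcnd \<Rightarrow> 'n \<Rightarrow> 'k \<Rightarrow> real" where
  "netdem I i k = ((if orig I k = i then 1 else 0) - (if dest I k = i then 1 else 0)) * dem I k"

definition outarcs :: "('n, 'k) mcnd \<Rightarrow> 'n \<Rightarrow> ('n \<times> 'n) set" where
  "outarcs I i = {a \<in> arcs I. fst a = i}"

definition inarcs :: "('n, 'k) mcnd \<Rightarrow> 'n \<Rightarrow> ('n \<times> 'n) set" where
  "inarcs I i = {a \<in> arcs I. snd a = i}"

text \<open>A dispersion is a pair (K_b, agg) where agg (i,j) = K_b^{ij} is the set of commodities
  aggregated on arc (i,j); the disaggregated ones are D_b^{ij} = K_b - K_b^{ij}.\<close>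
type_synonym ('n, 'k) dispersion = "'k set \<times> ('n \<times> 'n \<Rightarrow> 'k set)"

definition Kb :: "('n, 'k) dispersion \<Rightarrow> 'k set" where
  "Kb b = fst b"

definition Kagg :: "('n, 'k) dispersion \<Rightarrow> 'n \<times> 'n \<Rightarrow> 'k set" where
  "Kagg b a = snd b a"

definition Ddis :: "('n, 'k) dispersion \<Rightarrow> 'n \<times> 'n \<Rightarrow> 'k set" where
  "Ddis b a = Kb b - Kagg b a"

definition dispersion :: "('n, 'k) mcnd \<Rightarrow> ('n, 'k) dispersion \<Rightarrow> bool" where
  "dispersion I b \<longleftrightarrow>
     Kb b \<noteq> {} \<and> Kb b \<subseteq> comms I \<and>
     (\<forall>k\<in>Kb b. \<forall>k'\<in>Kb b. orig I k = orig I k') \<and>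
     (\<forall>a\<in>arcs I. Kagg b a \<subseteq> Kb b)"

definition partial_aggregation :: "('n, 'k) mcnd \<Rightarrow> ('n, 'k) dispersion set \<Rightarrow> bool" where
  "partial_aggregation I B \<longleftrightarrow>
     (\<forall>b\<in>B. dispersion I b) \<and> (\<forall>k\<in>comms I. \<exists>!b. b \<in> B \<and> k \<in> Kb b)"

definition Gfam :: "('n, 'k) dispersion \<Rightarrow> 'n \<times> 'n \<Rightarrow> 'k set set" where
  "Gfam b a = (if Kagg b a \<noteq> {} then {Kagg b a} else {}) \<union> {{k} | k. k \<in> Ddis b a}"

text \<open>Flow variables x_{ij}^D are represented by a function x (i,j) D; only the values with
  (i,j) an arc and D in G_b^{ij} for some b in B are meaningful.  Design variables y (i,j).\<close>

definition pa_obj ::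
  "('n, 'k) mcnd \<Rightarrow> ('n, 'k) dispersion set \<Rightarrow> ('n \<times> 'n \<Rightarrow> 'k set \<Rightarrow> real) \<Rightarrow> ('n \<times> 'n \<Rightarrow> real) \<Rightarrow> real" where
  "pa_obj I B x y =
     (\<Sum>a\<in>arcs I. ucost I a * (\<Sum>b\<in>B. \<Sum>D\<in>Gfam b a. x a D)) + (\<Sum>a\<in>arcs I. fcost I a * y a)"

definition PA_LP_feasible ::
  "('n, 'k) mcnd \<Rightarrow> ('n, 'k) dispersion set \<Rightarrow> ('n \<times> 'n \<Rightarrow> 'k set \<Rightarrow> real) \<Rightarrow> ('n \<times> 'n \<Rightarrow> real) \<Rightarrow> bool" where
  "PA_LP_feasible I B x y \<longleftrightarrow>
     (\<forall>a\<in>arcs I. \<forall>b\<in>B. \<forall>D\<in>Gfam b a. x a D \<ge> 0) \<and>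
     (\<forall>a\<in>arcs I. 0 \<le> y a \<and> y a \<le> 1) \<and>
     (\<forall>b\<in>B. \<forall>i\<in>nodes I.
        (\<Sum>a\<in>outarcs I i. \<Sum>D\<in>Gfam b a. x a D) - (\<Sum>a\<in>inarcs I i. \<Sum>D\<in>Gfam b a. x a D)
          = (\<Sum>k\<in>Kb b. netdem I i k)) \<and>
     (\<forall>a\<in>arcs I. (\<Sum>b\<in>B. \<Sum>D\<in>Gfam b a. x a D) \<le> cap I a * y a) \<and>
     (\<forall>a\<in>arcs I. \<forall>b\<in>B. \<forall>D\<in>Gfam b a. x a D \<le> (\<Sum>k\<in>D. dem I k) * y a)"

definition PAi_LP_feasible ::
  "('n, 'k) mcnd \<Rightarrow> ('n, 'k) dispersion set \<Rightarrow> ('n \<times> 'n \<Rightarrow> 'k set \<Rightarrow> real) \<Rightarrow> ('n \<times> 'n \<Rightarrow> real) \<Rightarrow> bool" where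
  "PAi_LP_feasible I B x y \<longleftrightarrow>
     PA_LP_feasible I B x y \<and>
     (\<forall>b\<in>B. \<forall>k\<in>Kb b. \<forall>i\<in>nodes I.
        (\<Sum>a\<in>outarcs I i. \<Sum>D\<in>{D\<in>Gfam b a. k \<in> D}. x a D)
          - (\<Sum>a\<in>inarcs I i. \<Sum>D\<in>{D\<in>Gfam b a. D = {k}}. x a D) \<ge> netdem I i k \<and>
        (\<Sum>a\<in>outarcs I i. \<Sum>D\<in>{D\<in>Gfam b a. D = {k}}. x a D)
          - (\<Sum>a\<in>inarcs I i. \<Sum>D\<in>{D\<in>Gfam b a. k \<in> D}. x a D) \<le> netdem I i k)"

definition Lset :: "('n, 'k) mcnd \<Rightarrow> ('n, 'k) dispersion \<Rightarrow> 'n \<Rightarrow> 'k set" where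
  "Lset I b i = {k \<in> Kb b. (\<exists>a\<in>inarcs I i. k \<in> Ddis b a) \<or> (\<exists>a\<in>outarcs I i. k \<in> Ddis b a)}"

definition Mset :: "('n, 'k) mcnd \<Rightarrow> ('n, 'k) dispersion \<Rightarrow> 'n \<Rightarrow> 'k set set" where
  "Mset I b i = {{k} | k. k \<in> Lset I b i} \<union>
     (if Kb b - Lset I b i \<noteq> {} then {Kb b - Lset I b i} else {})"

definition Tin :: "('n, 'k) mcnd \<Rightarrow> ('n, 'k) dispersion \<Rightarrow> 'n \<Rightarrow> 'k set set" where
  "Tin I b i = {Kagg b a | a. a \<in> inarcs I i \<and> Kagg b a \<noteq> {}}"

definition Tout :: "('n, 'k) mcnd \<Rightarrow> ('n, 'k) dispersion \<Rightarrow> 'n \<Rightarrow> 'k set set" where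
  "Tout I b i = {Kagg b a | a. a \<in> outarcs I i \<and> Kagg b a \<noteq> {}}"

text \<open>zin b i C D stands for z_{CD}^{ib} (C in Tin, D in M);
  zout b i D C stands for z_{DC}^{ib} (D in M, C in Tout).\<close>
definition PAe_LP_feasible ::
  "('n, 'k) mcnd \<Rightarrow> ('n, 'k) dispersion set \<Rightarrow> ('n \<times> 'n \<Rightarrow> 'k set \<Rightarrow> real) \<Rightarrow> ('n \<times> 'n \<Rightarrow> real)
   \<Rightarrow> (('n, 'k) dispersion \<Rightarrow> 'n \<Rightarrow> 'k set \<Rightarrow> 'k set \<Rightarrow> real)
   \<Rightarrow> (('n, 'k) dispersion \<Rightarrow> 'n \<Rightarrow> 'k set \<Rightarrow> 'k set \<Rightarrow> real) \<Rightarrow> bool" where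
  "PAe_LP_feasible I B x y zin zout \<longleftrightarrow>
     PA_LP_feasible I B x y \<and>
     (\<forall>b\<in>B. \<forall>i\<in>nodes I. Lset I b i \<noteq> {} \<longrightarrow>
        (\<forall>C\<in>Tin I b i. \<forall>D\<in>Mset I b i. C \<inter> D \<noteq> {} \<longrightarrow> zin b i C D \<ge> 0) \<and>
        (\<forall>D\<in>Mset I b i. \<forall>C\<in>Tout I b i. C \<inter> D \<noteq> {} \<longrightarrow> zout b i D C \<ge> 0) \<and>
        (\<forall>D\<in>Mset I b i.
           (\<Sum>a\<in>{a\<in>outarcs I i. \<exists>k. D = {k} \<and> k \<in> Ddis b a}. x a D)
           - (\<Sum>a\<in>{a\<in>inarcs I i. \<exists>k. D = {k} \<and> k \<in> Ddis b a}. x a D)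
           + (\<Sum>C\<in>{C\<in>Tout I b i. C \<inter> D \<noteq> {}}. zout b i D C)
           - (\<Sum>C\<in>{C\<in>Tin I b i. C \<inter> D \<noteq> {}}. zin b i C D)
           = (\<Sum>k\<in>D. netdem I i k)) \<and>
        (\<forall>C\<in>Tin I b i.
           (\<Sum>D\<in>{D\<in>Mset I b i. C \<inter> D \<noteq> {}}. zin b i C D)
           - (\<Sum>a\<in>{a\<in>inarcs I i. Kagg b a = C}. x a C) = 0) \<and>
        (\<forall>C\<in>Tout I b i.
           (\<Sum>a\<in>{a\<in>outarcs I i. Kagg b a = C}. x a C)
           - (\<Sum>D\<in>{D\<in>Mset I b i. C \<inter> D \<noteq> {}}. zout b i D C) = 0))"

text \<open>The objective of PAe is that of PA (the z variables have zero cost).\<close>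
definition pae_obj ::
  "('n, 'k) mcnd \<Rightarrow> ('n, 'k) dispersion set \<Rightarrow> ('n \<times> 'n \<Rightarrow> 'k set \<Rightarrow> real) \<Rightarrow> ('n \<times> 'n \<Rightarrow> real)
   \<Rightarrow> (('n, 'k) dispersion \<Rightarrow> 'n \<Rightarrow> 'k set \<Rightarrow> 'k set \<Rightarrow> real)
   \<Rightarrow> (('n, 'k) dispersion \<Rightarrow> 'n \<Rightarrow> 'k set \<Rightarrow> 'k set \<Rightarrow> real) \<Rightarrow> real" where
  "pae_obj I B x y zin zout = pa_obj I B x y"

end

theory Submission
  imports Defs
begin

text \<open>Fix a dispersion \<open>b\<close>, one of its commodities \<open>k\<close> and a node \<open>i\<close>, and let \<open>D\<close> be
  the block of \<open>M_b^i\<close> containing \<open>k\<close>. The PAe balance of \<open>D\<close> at \<open>i\<close> equates the net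
  disaggregated outflow of \<open>D\<close> plus the net share of \<open>D\<close> in the aggregated classes with the net
  demand of \<open>D\<close>. The flow on the arcs aggregating a class that contains \<open>k\<close> dominates the share
  of \<open>D\<close> in it, with equality for the class \<open>{k}\<close>. If \<open>D = {k}\<close> both PAi inequalities
  follow at once; otherwise \<open>k\<close> is aggregated on every arc at \<open>i\<close>, and they follow because
  commodities with a common origin have net demands of a common sign. If nothing is disaggregated
  at \<open>i\<close>, PA flow conservation takes the place of the PAe balance.

  For the converse, the PAi inequalities let aggregated flow of a class enter a node at which its
  commodities are otherwise balanced, whereas PAe has to assign that flow to the blocks of the
  node.\<close>

section \<open>Flows of one commodity through a node\<close>

lemma sum_Gfam:
  assumes "finite (Kb b)"
  shows "(\<Sum>D\<in>Gfam b a. f D) =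
           (if Kagg b a \<noteq> {} then f (Kagg b a) else 0) + (\<Sum>k\<in>Ddis b a. f {k})"
proof -
  have "finite (Ddis b a)"
    using assms by (simp add: Ddis_def)
  moreover have "Gfam b a = (if Kagg b a \<noteq> {} then {Kagg b a} else {}) \<union> (\<lambda>k. {k}) ` Ddis b a"
    and "(if Kagg b a \<noteq> {} then {Kagg b a} else {}) \<inter> (\<lambda>k. {k}) ` Ddis b a = {}"
    by (auto simp: Gfam_def Ddis_def)
  ultimately show ?thesis
    by (simp add: sum.union_disjoint sum.reindex)
qed

lemma sum_Gfam_containing:
  "(\<Sum>D\<in>{D\<in>Gfam b a. k \<in> D}. f D) =
     (if k \<in> Kagg b a then f (Kagg b a) else 0) + (if k \<in> Ddis b a then f {k} else 0)"
proof -
  have "{D\<in>Gfam b a. k \<in> D} =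
          (if k \<in> Kagg b a then {Kagg b a} else {}) \<union> (if k \<in> Ddis b a then {{k}} else {})"
    and "\<not> (k \<in> Kagg b a \<and> k \<in> Ddis b a)"
    by (auto simp: Gfam_def Ddis_def)
  then show ?thesis
    by auto
qed

lemma sum_Gfam_singleton:
  "(\<Sum>D\<in>{D\<in>Gfam b a. D = {k}}. f D) =
     (if k \<in> Ddis b a then f {k} else 0) + (if Kagg b a = {k} then f {k} else 0)"
proof -
  have "{D\<in>Gfam b a. D = {k}} = (if k \<in> Ddis b a \<or> Kagg b a = {k} then {{k}} else {})"
    and "\<not> (k \<in> Ddis b a \<and> Kagg b a = {k})"
    by (auto simp: Gfam_def Ddis_def)
  then show ?thesis
    by auto
qed

lemma Kagg_in_Gfam: "k \<in> Kagg b a \<Longrightarrow> Kagg b a \<in> Gfam b a"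
  unfolding Gfam_def by auto

lemma finite_arcs: "mcnd_instance I \<Longrightarrow> finite (arcs I)"
  unfolding mcnd_instance_def by (meson finite_SigmaI finite_subset)

lemma finite_outarcs: "mcnd_instance I \<Longrightarrow> finite (outarcs I i)"
  and finite_inarcs: "mcnd_instance I \<Longrightarrow> finite (inarcs I i)"
  unfolding outarcs_def inarcs_def by (simp_all add: finite_arcs)

lemma Lset_subset: "Lset I b i \<subseteq> Kb b"
  unfolding Lset_def by blast

lemma finite_Mset:
  assumes "finite (Kb b)"
  shows "finite (Mset I b i)"
proof -
  have "{{k} |k. k \<in> Lset I b i} = (\<lambda>k. {k}) ` Lset I b i"
    by blast
  then show ?thesis
    unfolding Mset_def using finite_subset[OF Lset_subset assms] by simp
qed

lemma dem_nonneg: "mcnd_instance I \<Longrightarrow> k \<in> comms I \<Longrightarrow> 0 \<le> dem I k"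
  unfolding mcnd_instance_def by blast

lemma Kb_subset_comms: "dispersion I b \<Longrightarrow> Kb b \<subseteq> comms I"
  unfolding dispersion_def by blast

lemma finite_Kb:
  assumes "mcnd_instance I" "dispersion I b"
  shows "finite (Kb b)"
proof (rule finite_subset)
  show "Kb b \<subseteq> comms I"
    using assms(2) by (rule Kb_subset_comms)
  show "finite (comms I)"
    using assms(1) by (simp add: mcnd_instance_def)
qed

lemma summand_between_0_and_sum:
  fixes f :: "'a \<Rightarrow> real"
  assumes "finite S" "k \<in> S" and "(\<forall>k'\<in>S. 0 \<le> f k') \<or> (\<forall>k'\<in>S. f k' \<le> 0)"
  shows "min 0 (\<Sum>k'\<in>S. f k') \<le> f k \<and> f k \<le> max 0 (\<Sum>k'\<in>S. f k')"
  using assms(3)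
proof
  assume "\<forall>k'\<in>S. 0 \<le> f k'"
  then show ?thesis
    using assms(1,2) member_le_sum[of k S f] sum_nonneg[of S f] by auto
next
  assume "\<forall>k'\<in>S. f k' \<le> 0"
  then show ?thesis
    using assms(1,2) member_le_sum[of k S "\<lambda>k'. - f k'"] sum_nonpos[of S f]
    by (auto simp: sum_negf)
qed

text \<open>The commodities of a dispersion share their origin, so their net demands at a node have
  a common sign.\<close>
lemma netdem_between_0_and_sum:
  assumes "mcnd_instance I" "dispersion I b" "S \<subseteq> Kb b" "k \<in> S"
  shows "min 0 (\<Sum>k'\<in>S. netdem I i k') \<le> netdem I i k \<and>
           netdem I i k \<le> max 0 (\<Sum>k'\<in>S. netdem I i k')"
proof (rule summand_between_0_and_sum)
  show "finite S"
    using finite_Kb[OF assms(1,2)] assms(3) by (rule finite_subset[rotated])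
  have "orig I k' = orig I k" if "k' \<in> S" for k'
    using assms(2-4) that unfolding dispersion_def by blast
  moreover have "0 \<le> dem I k'" if "k' \<in> S" for k'
    using dem_nonneg[OF assms(1)] Kb_subset_comms[OF assms(2)] assms(3) that by blast
  ultimately show "(\<forall>k'\<in>S. 0 \<le> netdem I i k') \<or> (\<forall>k'\<in>S. netdem I i k' \<le> 0)"
    by (cases "orig I k = i") (auto simp: netdem_def)
qed (use assms in simp)

definition agg_flow ::
  "('n \<times> 'n) set \<Rightarrow> ('n, 'k) dispersion \<Rightarrow> ('n \<times> 'n \<Rightarrow> 'k set \<Rightarrow> real) \<Rightarrow> 'k \<Rightarrow> real" where
  "agg_flow A b x k = (\<Sum>a\<in>A. if k \<in> Kagg b a then x a (Kagg b a) else 0)"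

definition disagg_flow ::
  "('n \<times> 'n) set \<Rightarrow> ('n, 'k) dispersion \<Rightarrow> ('n \<times> 'n \<Rightarrow> 'k set \<Rightarrow> real) \<Rightarrow> 'k \<Rightarrow> real" where
  "disagg_flow A b x k = (\<Sum>a\<in>A. if k \<in> Ddis b a then x a {k} else 0)"

definition singleton_agg_flow ::
  "('n \<times> 'n) set \<Rightarrow> ('n, 'k) dispersion \<Rightarrow> ('n \<times> 'n \<Rightarrow> 'k set \<Rightarrow> real) \<Rightarrow> 'k \<Rightarrow> real" where
  "singleton_agg_flow A b x k = (\<Sum>a\<in>A. if Kagg b a = {k} then x a {k} else 0)"

definition PAi_constraint ::
  "('n, 'k) mcnd \<Rightarrow> ('n, 'k) dispersion \<Rightarrow> ('n \<times> 'n \<Rightarrow> 'k set \<Rightarrow> real) \<Rightarrow> 'n \<Rightarrow> 'k \<Rightarrow> bool" where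
  "PAi_constraint I b x i k \<longleftrightarrow>
     (\<Sum>a\<in>outarcs I i. \<Sum>D\<in>{D\<in>Gfam b a. k \<in> D}. x a D)
       - (\<Sum>a\<in>inarcs I i. \<Sum>D\<in>{D\<in>Gfam b a. D = {k}}. x a D) \<ge> netdem I i k \<and>
     (\<Sum>a\<in>outarcs I i. \<Sum>D\<in>{D\<in>Gfam b a. D = {k}}. x a D)
       - (\<Sum>a\<in>inarcs I i. \<Sum>D\<in>{D\<in>Gfam b a. k \<in> D}. x a D) \<le> netdem I i k"

lemma PAi_LP_feasible_iff:
  "PAi_LP_feasible I B x y \<longleftrightarrow>
     PA_LP_feasible I B x y \<and> (\<forall>b\<in>B. \<forall>k\<in>Kb b. \<forall>i\<in>nodes I. PAi_constraint I b x i k)"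
  unfolding PAi_LP_feasible_def PAi_constraint_def ..

lemma PAi_constraint_iff_flows:
  "PAi_constraint I b x i k \<longleftrightarrow>
     netdem I i k \<le> agg_flow (outarcs I i) b x k + disagg_flow (outarcs I i) b x k
                      - disagg_flow (inarcs I i) b x k - singleton_agg_flow (inarcs I i) b x k \<and>
     disagg_flow (outarcs I i) b x k + singleton_agg_flow (outarcs I i) b x k
       - agg_flow (inarcs I i) b x k - disagg_flow (inarcs I i) b x k \<le> netdem I i k"
  unfolding PAi_constraint_def agg_flow_def disagg_flow_def singleton_agg_flow_def
    sum_Gfam_containing sum_Gfam_singleton sum.distrib
  by (simp add: algebra_simps)

lemma agg_flow_nonneg:
  assumes "\<And>a D. a \<in> A \<Longrightarrow> D \<in> Gfam b a \<Longrightarrow> 0 \<le> x a D"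
  shows "0 \<le> agg_flow A b x k"
  unfolding agg_flow_def by (rule sum_nonneg) (simp add: assms Kagg_in_Gfam)

lemma singleton_agg_flow_le_agg_flow:
  assumes "\<And>a D. a \<in> A \<Longrightarrow> D \<in> Gfam b a \<Longrightarrow> 0 \<le> x a D"
  shows "singleton_agg_flow A b x k \<le> agg_flow A b x k"
  unfolding agg_flow_def singleton_agg_flow_def by (rule sum_mono) (simp add: assms Kagg_in_Gfam)

text \<open>Read \<open>Ao, Do, So\<close> as the aggregated, disaggregated and singleton-aggregated outflow of
  a commodity, \<open>Zo\<close> as the share of its block in the aggregated outflow (likewise for inflow),
  \<open>N\<close> as the net demand of the block and \<open>d\<close> as that of the commodity.\<close>
lemma balance_bounds:
  fixes d N Ao Ai Do Di So Si Zo Zi :: real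
  assumes "0 \<le> Zo" "Zo \<le> Ao" "So \<le> Zo"
    and "0 \<le> Zi" "Zi \<le> Ai" "Si \<le> Zi"
    and "Do - Di + Zo - Zi = N"
    and "min 0 N \<le> d \<and> d \<le> max 0 N"
    and "N = d \<or> Do = 0 \<and> Di = 0 \<and> So = 0 \<and> Si = 0"
  shows "d \<le> Ao + Do - Di - Si \<and> Do + So - Ai - Di \<le> d"
  using assms(9)
proof
  assume "Do = 0 \<and> Di = 0 \<and> So = 0 \<and> Si = 0"
  with assms(1-8) show ?thesis
    by (simp add: min_def max_def split: if_splits)
qed (use assms in linarith)

text \<open>The PAe constraints at a node, abstracted: \<open>w D C\<close> (the z-variables) splits the flow
  on the arcs aggregating \<open>C\<close> among the blocks \<open>D \<in> M\<close> meeting \<open>C\<close>; \<open>Dk\<close> is the block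
  containing \<open>k\<close>.\<close>
locale aggregate_splitting =
  fixes A :: "'a set" and g :: "'a \<Rightarrow> 'k set" and x :: "'a \<Rightarrow> 'k set \<Rightarrow> real"
    and M :: "'k set set" and w :: "'k set \<Rightarrow> 'k set \<Rightarrow> real" and Dk :: "'k set" and k :: 'k
  assumes finite_A: "finite A" and finite_M: "finite M"
    and block: "Dk \<in> M" "k \<in> Dk" and block_unique: "\<And>D. D \<in> M \<Longrightarrow> k \<in> D \<Longrightarrow> D = Dk"
    and class_split: "\<And>C. C \<in> {g a |a. a \<in> A \<and> g a \<noteq> {}} \<Longrightarrow>
                  (\<Sum>a\<in>{a\<in>A. g a = C}. x a C) = (\<Sum>D\<in>{D\<in>M. C \<inter> D \<noteq> {}}. w D C)"
    and class_split_nonneg: "\<And>C D. C \<in> {g a |a. a \<in> A \<and> g a \<noteq> {}} \<Longrightarrow> D \<in> M \<Longrightarrow>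
                  C \<inter> D \<noteq> {} \<Longrightarrow> 0 \<le> w D C"
begin

abbreviation "classes_k \<equiv> {C \<in> {g a |a. a \<in> A \<and> g a \<noteq> {}}. k \<in> C}"

lemma finite_classes_k: "finite classes_k"
  by (rule finite_subset[of _ "g ` A"]) (use finite_A in auto)

lemma block_share_nonneg: "0 \<le> (\<Sum>C\<in>classes_k. w Dk C)"
  by (rule sum_nonneg) (use class_split_nonneg block in blast)

lemma block_share_le: "w Dk C \<le> (\<Sum>D\<in>{D\<in>M. C \<inter> D \<noteq> {}}. w D C)" if "C \<in> classes_k"
  by (rule member_le_sum) (use that block class_split_nonneg finite_M in auto)

lemma block_share_le_agg:
  "(\<Sum>C\<in>classes_k. w Dk C) \<le> (\<Sum>a\<in>A. if k \<in> g a then x a (g a) else 0)"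
proof -
  have "(\<Sum>C\<in>classes_k. w Dk C) \<le> (\<Sum>C\<in>classes_k. \<Sum>D\<in>{D\<in>M. C \<inter> D \<noteq> {}}. w D C)"
    by (intro sum_mono block_share_le)
  also have "\<dots> = (\<Sum>C\<in>classes_k. \<Sum>a\<in>{a\<in>A. g a = C}. x a C)"
    using class_split by simp
  also have "\<dots> = (\<Sum>C\<in>g ` {a\<in>A. k \<in> g a}. \<Sum>a\<in>{a\<in>{a\<in>A. k \<in> g a}. g a = C}. x a (g a))"
    by (intro sum.cong) auto
  also have "\<dots> = (\<Sum>a\<in>{a\<in>A. k \<in> g a}. x a (g a))"
    using finite_A by (intro sum.image_gen[symmetric]) simp
  also have "\<dots> = (\<Sum>a\<in>A. if k \<in> g a then x a (g a) else 0)"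
    using finite_A by (simp add: sum.inter_filter)
  finally show ?thesis .
qed

lemma singleton_agg_le_block_share:
  "(\<Sum>a\<in>A. if g a = {k} then x a {k} else 0) \<le> (\<Sum>C\<in>classes_k. w Dk C)"
proof (cases "{k} \<in> {g a |a. a \<in> A \<and> g a \<noteq> {}}")
  case True
  have "{D\<in>M. {k} \<inter> D \<noteq> {}} = {Dk}"
    using block block_unique by blast
  then have "(\<Sum>a\<in>A. if g a = {k} then x a {k} else 0) = w Dk {k}"
    using class_split[OF True] finite_A by (simp add: sum.inter_filter)
  also have "\<dots> \<le> (\<Sum>C\<in>classes_k. w Dk C)"
    by (rule member_le_sum) (use True block class_split_nonneg finite_classes_k in auto)
  finally show ?thesis .
next
  case False
  then have "(\<Sum>a\<in>A. if g a = {k} then x a {k} else 0) = 0"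
    by (intro sum.neutral) auto
  then show ?thesis
    using block_share_nonneg by simp
qed

end

section \<open>PAe implies PAi\<close>

lemma
  assumes "PAe_LP_feasible I B x y zin zout" "b \<in> B" "i \<in> nodes I" "Lset I b i \<noteq> {}"
  shows PAe_zin_nonneg:
      "C \<in> Tin I b i \<Longrightarrow> D \<in> Mset I b i \<Longrightarrow> C \<inter> D \<noteq> {} \<Longrightarrow> 0 \<le> zin b i C D"
    and PAe_zout_nonneg:
      "C \<in> Tout I b i \<Longrightarrow> D \<in> Mset I b i \<Longrightarrow> C \<inter> D \<noteq> {} \<Longrightarrow> 0 \<le> zout b i D C"
    and PAe_block_balance: "D \<in> Mset I b i \<Longrightarrow>
      (\<Sum>a\<in>{a\<in>outarcs I i. \<exists>k. D = {k} \<and> k \<in> Ddis b a}. x a D)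
      - (\<Sum>a\<in>{a\<in>inarcs I i. \<exists>k. D = {k} \<and> k \<in> Ddis b a}. x a D)
      + (\<Sum>C\<in>{C\<in>Tout I b i. C \<inter> D \<noteq> {}}. zout b i D C)
      - (\<Sum>C\<in>{C\<in>Tin I b i. C \<inter> D \<noteq> {}}. zin b i C D)
      = (\<Sum>k\<in>D. netdem I i k)"
    and PAe_in_split: "C \<in> Tin I b i \<Longrightarrow>
      (\<Sum>a\<in>{a\<in>inarcs I i. Kagg b a = C}. x a C) = (\<Sum>D\<in>{D\<in>Mset I b i. C \<inter> D \<noteq> {}}. zin b i C D)"
    and PAe_out_split: "C \<in> Tout I b i \<Longrightarrow>
      (\<Sum>a\<in>{a\<in>outarcs I i. Kagg b a = C}. x a C) = (\<Sum>D\<in>{D\<in>Mset I b i. C \<inter> D \<noteq> {}}. zout b i D C)"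
  using assms unfolding PAe_LP_feasible_def by simp_all

lemma agg_if_notin_Lset:
  assumes "k \<in> Kb b" "k \<notin> Lset I b i" "a \<in> inarcs I i \<union> outarcs I i"
  shows "k \<in> Kagg b a"
proof (rule ccontr)
  assume "k \<notin> Kagg b a"
  then have "k \<in> Ddis b a"
    using assms(1) by (simp add: Ddis_def)
  then have "k \<in> Lset I b i"
    using assms(1,3) unfolding Lset_def by blast
  with assms(2) show False ..
qed

lemma disagg_flow_eq_0:
  assumes "k \<in> Kb b" "k \<notin> Lset I b i" "A \<subseteq> inarcs I i \<union> outarcs I i"
  shows "disagg_flow A b x k = 0"
proof -
  have "k \<in> Kagg b a" if "a \<in> A" for a
    using agg_if_notin_Lset[OF assms(1,2), of a] assms(3) that by blast
  then show ?thesis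
    unfolding disagg_flow_def Ddis_def by simp
qed

definition Mblock :: "('n, 'k) mcnd \<Rightarrow> ('n, 'k) dispersion \<Rightarrow> 'n \<Rightarrow> 'k \<Rightarrow> 'k set" where
  "Mblock I b i k = (if k \<in> Lset I b i then {k} else Kb b - Lset I b i)"

lemma Mblock_in_Mset: "k \<in> Kb b \<Longrightarrow> Mblock I b i k \<in> Mset I b i"
  unfolding Mblock_def Mset_def by auto

lemma mem_Mblock: "k \<in> Kb b \<Longrightarrow> k \<in> Mblock I b i k"
  unfolding Mblock_def by simp

lemma Mset_eq_Mblock:
  assumes "D \<in> Mset I b i" "k \<in> D"
  shows "D = Mblock I b i k"
proof -
  consider k' where "k' \<in> Lset I b i" "D = {k'}" | "D = Kb b - Lset I b i"
    using assms(1) unfolding Mset_def by (auto split: if_split_asm)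
  then show ?thesis
    using assms(2) by cases (auto simp: Mblock_def)
qed

lemma Kagg_meets_Mblock_iff:
  assumes "k \<in> Kb b" "a \<in> inarcs I i \<union> outarcs I i"
  shows "Kagg b a \<inter> Mblock I b i k \<noteq> {} \<longleftrightarrow> k \<in> Kagg b a"
proof (cases "k \<in> Lset I b i")
  case False
  then have "k \<in> Kagg b a" "k \<in> Mblock I b i k"
    using agg_if_notin_Lset[OF assms(1) False assms(2)] mem_Mblock[OF assms(1)] by auto
  then show ?thesis
    by blast
qed (simp add: Mblock_def)

lemma classes_meeting_Mblock:
  assumes "k \<in> Kb b" "A \<subseteq> inarcs I i \<union> outarcs I i"
  shows "{C\<in>{Kagg b a |a. a \<in> A \<and> Kagg b a \<noteq> {}}. C \<inter> Mblock I b i k \<noteq> {}}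
           = {C\<in>{Kagg b a |a. a \<in> A \<and> Kagg b a \<noteq> {}}. k \<in> C}"
proof (intro Collect_cong conj_cong refl)
  fix C
  assume "C \<in> {Kagg b a |a. a \<in> A \<and> Kagg b a \<noteq> {}}"
  then obtain a where "a \<in> A" "C = Kagg b a"
    by blast
  then show "C \<inter> Mblock I b i k \<noteq> {} \<longleftrightarrow> k \<in> C"
    using Kagg_meets_Mblock_iff[OF assms(1), of a I i] assms(2) by blast
qed

lemma sum_Mblock_disagg:
  assumes "k \<in> Kb b" "A \<subseteq> inarcs I i \<union> outarcs I i" "finite A"
  shows "(\<Sum>a\<in>{a\<in>A. \<exists>k'. Mblock I b i k = {k'} \<and> k' \<in> Ddis b a}. x a (Mblock I b i k))
           = disagg_flow A b x k"
proof (cases "k \<in> Lset I b i")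
  case True
  then have "{a\<in>A. \<exists>k'. Mblock I b i k = {k'} \<and> k' \<in> Ddis b a} = {a\<in>A. k \<in> Ddis b a}"
    by (auto simp: Mblock_def)
  then show ?thesis
    using True assms(3) by (simp add: disagg_flow_def Mblock_def sum.inter_filter)
next
  case False
  have "k \<in> Kagg b a" if "a \<in> A" for a
    using agg_if_notin_Lset[OF assms(1) False, of a] assms(2) that by blast
  moreover have "k' = k" if "Mblock I b i k = {k'}" for k'
    using mem_Mblock[OF assms(1), of I i] that by simp
  ultimately have "{a\<in>A. \<exists>k'. Mblock I b i k = {k'} \<and> k' \<in> Ddis b a} = {}"
    by (auto simp: Ddis_def)
  with False assms show ?thesis
    by (simp only: sum.empty disagg_flow_eq_0)
qed

text \<open>An arc aggregating exactly \<open>{k}\<close> puts every other commodity into \<open>Lset\<close>, which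
  makes \<open>{k}\<close> a block.\<close>
lemma singleton_agg_flow_eq_0:
  assumes "k \<in> Kb b" "Mblock I b i k \<noteq> {k}" "A \<subseteq> inarcs I i \<union> outarcs I i"
  shows "singleton_agg_flow A b x k = 0"
proof -
  have "Kagg b a \<noteq> {k}" if "a \<in> A" for a
  proof
    assume "Kagg b a = {k}"
    then have "k' \<in> Ddis b a" if "k' \<in> Kb b - {k}" for k'
      using that by (simp add: Ddis_def)
    moreover have "a \<in> inarcs I i \<or> a \<in> outarcs I i"
      using \<open>a \<in> A\<close> assms(3) by blast
    ultimately have "Kb b - Lset I b i \<subseteq> {k}"
      unfolding Lset_def by blast
    then have "Mblock I b i k = {k}"
      unfolding Mblock_def using assms(1) by (cases "k \<in> Lset I b i") auto
    then show False
      using assms(2) by simp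
  qed
  then show ?thesis
    unfolding singleton_agg_flow_def by simp
qed

lemma Mblock_subset: "Mblock I b i k \<subseteq> Kb b"
  unfolding Mblock_def using Lset_subset[of I b i] by auto

lemma Mblock_netdem_or_flows_vanish:
  assumes "k \<in> Kb b"
  shows "(\<Sum>k'\<in>Mblock I b i k. netdem I i k') = netdem I i k \<or>
           disagg_flow (outarcs I i) b x k = 0 \<and> disagg_flow (inarcs I i) b x k = 0 \<and>
           singleton_agg_flow (outarcs I i) b x k = 0 \<and> singleton_agg_flow (inarcs I i) b x k = 0"
proof (cases "Mblock I b i k = {k}")
  case False
  then have "k \<notin> Lset I b i"
    by (auto simp: Mblock_def)
  with False assms show ?thesis
    by (simp add: disagg_flow_eq_0 singleton_agg_flow_eq_0)
qed simp

lemma PAi_constraint_if_Lset_empty: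
  assumes inst: "mcnd_instance I" and disp: "dispersion I b" and PA: "PA_LP_feasible I B x y"
    and bB: "b \<in> B" and iN: "i \<in> nodes I" and kK: "k \<in> Kb b" and L: "Lset I b i = {}"
  shows "PAi_constraint I b x i k"
proof -
  have x_nonneg: "0 \<le> x a D" if "a \<in> outarcs I i \<union> inarcs I i" "D \<in> Gfam b a" for a D
    using PA bB that unfolding PA_LP_feasible_def outarcs_def inarcs_def by blast
  have arc_flow: "(\<Sum>D\<in>Gfam b a. x a D) = (if k \<in> Kagg b a then x a (Kagg b a) else 0)"
    if "a \<in> outarcs I i \<union> inarcs I i" for a
  proof -
    have "Kagg b a \<subseteq> Kb b"
      using disp that unfolding dispersion_def outarcs_def inarcs_def by blast
    moreover have "Kb b \<subseteq> Kagg b a"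
      using agg_if_notin_Lset[of _ b I i a] that L by blast
    ultimately have "Kagg b a = Kb b"
      by blast
    then show ?thesis
      using kK by (auto simp: sum_Gfam[OF finite_Kb[OF inst disp]] Ddis_def)
  qed
  have "(\<Sum>a\<in>outarcs I i. \<Sum>D\<in>Gfam b a. x a D) - (\<Sum>a\<in>inarcs I i. \<Sum>D\<in>Gfam b a. x a D)
          = (\<Sum>k'\<in>Kb b. netdem I i k')"
    using PA bB iN unfolding PA_LP_feasible_def by blast
  then have "agg_flow (outarcs I i) b x k - agg_flow (inarcs I i) b x k
               = (\<Sum>k'\<in>Mblock I b i k. netdem I i k')"
    unfolding agg_flow_def by (simp add: arc_flow Mblock_def L)
  then have balance: "disagg_flow (outarcs I i) b x k - disagg_flow (inarcs I i) b x k
      + agg_flow (outarcs I i) b x k - agg_flow (inarcs I i) b x k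
      = (\<Sum>k'\<in>Mblock I b i k. netdem I i k')"
    using disagg_flow_eq_0[where I = I and i = i] kK L by simp
  show ?thesis
    unfolding PAi_constraint_iff_flows
    using balance_bounds[OF agg_flow_nonneg order_refl singleton_agg_flow_le_agg_flow
        agg_flow_nonneg order_refl singleton_agg_flow_le_agg_flow balance
        netdem_between_0_and_sum[OF inst disp Mblock_subset mem_Mblock[OF kK]]
        Mblock_netdem_or_flows_vanish[OF kK]]
    x_nonneg by blast
qed

lemma PAi_constraint_if_Lset_nonempty:
  assumes inst: "mcnd_instance I" and disp: "dispersion I b"
    and PAe: "PAe_LP_feasible I B x y zin zout"
    and bB: "b \<in> B" and iN: "i \<in> nodes I" and kK: "k \<in> Kb b" and L: "Lset I b i \<noteq> {}"
  shows "PAi_constraint I b x i k"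
proof -
  let ?Dk = "Mblock I b i k"
  note facts = finite_Mset[OF finite_Kb[OF inst disp]] Mblock_in_Mset[OF kK] mem_Mblock[OF kK]
    Mset_eq_Mblock
  interpret outflow: aggregate_splitting "outarcs I i" "Kagg b" x "Mset I b i" "zout b i" ?Dk k
    using PAe_out_split[OF PAe bB iN L] PAe_zout_nonneg[OF PAe bB iN L]
    by unfold_locales (use facts finite_outarcs[OF inst] in \<open>simp_all add: Tout_def\<close>)
  interpret inflow: aggregate_splitting "inarcs I i" "Kagg b" x "Mset I b i" "\<lambda>D C. zin b i C D" ?Dk k
    using PAe_in_split[OF PAe bB iN L] PAe_zin_nonneg[OF PAe bB iN L]
    by unfold_locales (use facts finite_inarcs[OF inst] in \<open>simp_all add: Tin_def\<close>)
  have "(\<Sum>a\<in>{a\<in>outarcs I i. \<exists>k'. ?Dk = {k'} \<and> k' \<in> Ddis b a}. x a ?Dk)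
          - (\<Sum>a\<in>{a\<in>inarcs I i. \<exists>k'. ?Dk = {k'} \<and> k' \<in> Ddis b a}. x a ?Dk)
          + (\<Sum>C\<in>{C\<in>Tout I b i. C \<inter> ?Dk \<noteq> {}}. zout b i ?Dk C)
          - (\<Sum>C\<in>{C\<in>Tin I b i. C \<inter> ?Dk \<noteq> {}}. zin b i C ?Dk)
          = (\<Sum>k'\<in>?Dk. netdem I i k')"
    by (rule PAe_block_balance[OF PAe bB iN L Mblock_in_Mset[OF kK]])
  then have balance: "disagg_flow (outarcs I i) b x k - disagg_flow (inarcs I i) b x k
          + (\<Sum>C\<in>{C\<in>Tout I b i. k \<in> C}. zout b i ?Dk C)
          - (\<Sum>C\<in>{C\<in>Tin I b i. k \<in> C}. zin b i C ?Dk)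
          = (\<Sum>k'\<in>?Dk. netdem I i k')"
    using inst kK
    unfolding Tout_def Tin_def classes_meeting_Mblock[OF kK Un_upper1]
      classes_meeting_Mblock[OF kK Un_upper2]
    by (simp add: sum_Mblock_disagg finite_outarcs finite_inarcs)
  show ?thesis
    unfolding PAi_constraint_iff_flows
    using balance_bounds[OF outflow.block_share_nonneg
        outflow.block_share_le_agg[folded agg_flow_def]
        outflow.singleton_agg_le_block_share[folded singleton_agg_flow_def]
        inflow.block_share_nonneg
        inflow.block_share_le_agg[folded agg_flow_def]
        inflow.singleton_agg_le_block_share[folded singleton_agg_flow_def]
        balance[unfolded Tout_def Tin_def]
        netdem_between_0_and_sum[OF inst disp Mblock_subset mem_Mblock[OF kK]]
        Mblock_netdem_or_flows_vanish[OF kK]] .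
qed

lemma PAe_LP_feasible_imp_PAi_LP_feasible:
  assumes inst: "mcnd_instance I" and pa: "partial_aggregation I B"
    and PAe: "PAe_LP_feasible I B x y zin zout"
  shows "PAi_LP_feasible I B x y"
proof -
  have PA: "PA_LP_feasible I B x y"
    using PAe unfolding PAe_LP_feasible_def by blast
  have "PAi_constraint I b x i k" if "b \<in> B" "k \<in> Kb b" "i \<in> nodes I" for b k i
  proof -
    have "dispersion I b"
      using pa that(1) unfolding partial_aggregation_def by blast
    then show ?thesis
      using PAi_constraint_if_Lset_empty[OF inst _ PA that(1,3,2)]
        PAi_constraint_if_Lset_nonempty[OF inst _ PAe that(1,3,2)]
      by blast
  qed
  with PA show ?thesis
    unfolding PAi_LP_feasible_iff by blast
qed

section \<open>A PAi-feasible point without PAe extension\<close>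

text \<open>At node 1 the commodities 2 and 3 are disaggregated on (0,1) and (1,3) and carry no flow
  there, so the PAe balances of the blocks \<open>{2}\<close> and \<open>{3}\<close> force their z-variables to vanish,
  yet one unit of aggregated \<open>{2, 3}\<close>-flow enters on (2,1).\<close>
definition cex_instance :: "(nat, nat) mcnd" where
  "cex_instance = \<lparr>nodes = {0, 1, 2, 3}, arcs = {(0, 1), (0, 2), (2, 1), (1, 3), (2, 3)},
     comms = {0, 1, 2, 3}, orig = (\<lambda>_. 0), dest = (\<lambda>_. 3), dem = (\<lambda>_. 1),
     cap = (\<lambda>_. 4), ucost = (\<lambda>_. 0), fcost = (\<lambda>_. 0)\<rparr>"

definition cex_agg :: "nat \<times> nat \<Rightarrow> nat set" where
  "cex_agg a = (if a = (0, 1) then {0, 1} else if a = (2, 1) then {2, 3}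
               else if a = (1, 3) then {} else {0, 1, 2, 3})"

definition cex_dispersion :: "(nat, nat) dispersion" where
  "cex_dispersion = ({0, 1, 2, 3}, cex_agg)"

definition cex_flow :: "nat \<times> nat \<Rightarrow> nat set \<Rightarrow> real" where
  "cex_flow a D =
     (if a = (0, 1) then (if 0 \<in> D then 1 else 0)
      else if a = (0, 2) then 3
      else if a = (2, 1) then (if 2 \<in> D then 1 else 0)
      else if a = (2, 3) then 2
      else if a = (1, 3) then (if 0 \<in> D \<or> 1 \<in> D then 1 else 0) else 0)"

lemma cex_instance_simps:
  "nodes cex_instance = {0, 1, 2, 3}" "arcs cex_instance = {(0, 1), (0, 2), (2, 1), (1, 3), (2, 3)}"
  "comms cex_instance = {0, 1, 2, 3}" "cap cex_instance a = 4" "dem cex_instance k = 1"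
  "netdem cex_instance i k = (if i = 0 then 1 else if i = 3 then -1 else 0)"
  unfolding cex_instance_def netdem_def by simp_all

\<comment> \<open>Node 1 appears as \<open>Suc 0\<close>, the simp normal form of \<open>1 :: nat\<close>.\<close>
lemma cex_outarcs:
  "outarcs cex_instance 0 = {(0, 1), (0, 2)}" "outarcs cex_instance (Suc 0) = {(1, 3)}"
  "outarcs cex_instance 2 = {(2, 1), (2, 3)}" "outarcs cex_instance 3 = {}"
  unfolding outarcs_def cex_instance_simps by auto

lemma cex_inarcs:
  "inarcs cex_instance 0 = {}" "inarcs cex_instance (Suc 0) = {(0, 1), (2, 1)}"
  "inarcs cex_instance 2 = {(0, 2)}" "inarcs cex_instance 3 = {(1, 3), (2, 3)}"
  unfolding inarcs_def cex_instance_simps by auto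

lemma cex_dispersion_simps:
  "Kb cex_dispersion = {0, 1, 2, 3}" "Kagg cex_dispersion a = cex_agg a"
  "Ddis cex_dispersion a = {0, 1, 2, 3} - cex_agg a"
  unfolding cex_dispersion_def Kb_def Kagg_def Ddis_def by simp_all

lemma cex_Gfam_iff:
  "D \<in> Gfam cex_dispersion a \<longleftrightarrow>
     cex_agg a \<noteq> {} \<and> D = cex_agg a \<or> (\<exists>k\<in>{0, 1, 2, 3} - cex_agg a. D = {k})"
  unfolding Gfam_def cex_dispersion_simps by auto

lemma cex_sum_Gfam:
  "(\<Sum>D\<in>Gfam cex_dispersion a. f D) =
     (if cex_agg a \<noteq> {} then f (cex_agg a) else 0) + (\<Sum>k\<in>{0, 1, 2, 3} - cex_agg a. f {k})"
  by (rule sum_Gfam[of cex_dispersion, unfolded cex_dispersion_simps]) simp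

lemma cex_mcnd_instance: "mcnd_instance cex_instance"
  unfolding mcnd_instance_def cex_instance_simps by (simp add: cex_instance_def)

lemma cex_partial_aggregation: "partial_aggregation cex_instance {cex_dispersion}"
  unfolding partial_aggregation_def dispersion_def cex_instance_def cex_dispersion_def Kb_def Kagg_def
    cex_agg_def
  by auto

lemma cex_PA_LP_feasible: "PA_LP_feasible cex_instance {cex_dispersion} cex_flow (\<lambda>_. 1)"
  unfolding PA_LP_feasible_def
proof (intro conjI)
  show "\<forall>a\<in>arcs cex_instance. \<forall>b\<in>{cex_dispersion}. \<forall>D\<in>Gfam b a. 0 \<le> cex_flow a D"
    by (auto simp: cex_Gfam_iff cex_instance_simps cex_flow_def cex_agg_def)
  show "\<forall>b\<in>{cex_dispersion}. \<forall>i\<in>nodes cex_instance.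
          (\<Sum>a\<in>outarcs cex_instance i. \<Sum>D\<in>Gfam b a. cex_flow a D)
          - (\<Sum>a\<in>inarcs cex_instance i. \<Sum>D\<in>Gfam b a. cex_flow a D)
          = (\<Sum>k\<in>Kb b. netdem cex_instance i k)"
    by (simp add: cex_instance_simps cex_outarcs cex_inarcs cex_sum_Gfam cex_dispersion_simps
        cex_agg_def cex_flow_def)
  show "\<forall>a\<in>arcs cex_instance. (\<Sum>b\<in>{cex_dispersion}. \<Sum>D\<in>Gfam b a. cex_flow a D)
          \<le> cap cex_instance a * 1"
    by (simp add: cex_instance_simps cex_sum_Gfam cex_agg_def cex_flow_def)
  show "\<forall>a\<in>arcs cex_instance. \<forall>b\<in>{cex_dispersion}. \<forall>D\<in>Gfam b a.
          cex_flow a D \<le> (\<Sum>k\<in>D. dem cex_instance k) * 1"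
    by (auto simp: cex_Gfam_iff cex_instance_simps cex_flow_def cex_agg_def)
qed simp

lemma cex_PAi_LP_feasible: "PAi_LP_feasible cex_instance {cex_dispersion} cex_flow (\<lambda>_. 1)"
  unfolding PAi_LP_feasible_iff PAi_constraint_iff_flows
    agg_flow_def disagg_flow_def singleton_agg_flow_def
  using cex_PA_LP_feasible
  by (simp add: cex_instance_simps cex_outarcs cex_inarcs cex_dispersion_simps cex_agg_def cex_flow_def)

lemma cex_Lset: "Lset cex_instance cex_dispersion 1 = {0, 1, 2, 3}"
  by (auto simp: Lset_def cex_inarcs cex_outarcs cex_dispersion_simps cex_agg_def)

lemma cex_Mset: "Mset cex_instance cex_dispersion 1 = {{0}, {1}, {2}, {3}}"
proof -
  have "{{k} |k. k \<in> Lset cex_instance cex_dispersion 1} = (\<lambda>k. {k}) ` {0, 1, 2, 3}"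
    unfolding cex_Lset by blast
  then show ?thesis
    unfolding Mset_def using cex_Lset by (simp add: cex_dispersion_simps)
qed

lemma cex_Tout: "Tout cex_instance cex_dispersion 1 = {}"
  by (simp add: Tout_def cex_outarcs cex_dispersion_simps cex_agg_def)

lemma cex_Tin: "Tin cex_instance cex_dispersion 1 = {{0, 1}, {2, 3}}"
proof -
  have "Tin cex_instance cex_dispersion 1
          = Kagg cex_dispersion ` {a \<in> inarcs cex_instance 1. Kagg cex_dispersion a \<noteq> {}}"
    unfolding Tin_def by blast
  also have "{a \<in> inarcs cex_instance 1. Kagg cex_dispersion a \<noteq> {}} = {(0, 1), (2, 1)}"
    by (auto simp: cex_inarcs cex_dispersion_simps cex_agg_def)
  finally show ?thesis
    by (simp add: cex_dispersion_simps cex_agg_def insert_commute)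
qed

lemma cex_not_PAe_LP_feasible: "\<not> PAe_LP_feasible cex_instance {cex_dispersion} cex_flow (\<lambda>_. 1) zin zout"
proof
  let ?I = cex_instance and ?b = cex_dispersion
  assume PAe: "PAe_LP_feasible ?I {?b} cex_flow (\<lambda>_. 1) zin zout"
  have node: "1 \<in> nodes ?I" "Lset ?I ?b 1 \<noteq> {}"
    using cex_Lset by (simp_all add: cex_instance_simps)
  have "zin ?b 1 {2, 3} {k} = 0" if k: "k \<in> {2, 3}" for k
  proof -
    have "{k} \<in> Mset ?I ?b 1"
      using cex_Mset k by simp
    moreover have "{a\<in>outarcs ?I 1. \<exists>k'. {k} = {k'} \<and> k' \<in> Ddis ?b a} = {(1, 3)}"
      using k by (auto simp: cex_outarcs cex_dispersion_simps cex_agg_def)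
    moreover have "{a\<in>inarcs ?I 1. \<exists>k'. {k} = {k'} \<and> k' \<in> Ddis ?b a} = {(0, 1)}"
      using k by (auto simp: cex_inarcs cex_dispersion_simps cex_agg_def)
    moreover have "{C\<in>Tin ?I ?b 1. C \<inter> {k} \<noteq> {}} = {{2, 3}}"
      using k unfolding cex_Tin by auto
    ultimately show ?thesis
      using PAe_block_balance[OF PAe singletonI node, of "{k}"] k cex_Tout
      by (auto simp: cex_flow_def cex_instance_simps)
  qed
  moreover have "zin ?b 1 {2, 3} {2} + zin ?b 1 {2, 3} {3} = 1"
  proof -
    have "{D\<in>Mset ?I ?b 1. {2, 3} \<inter> D \<noteq> {}} = {{2}, {3}}"
      unfolding cex_Mset Collect_conj_eq Collect_mem_eq by simp
    moreover have "{a\<in>inarcs ?I 1. Kagg ?b a = {2, 3}} = {(2, 1)}"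
    proof -
      have "0 \<in> cex_agg (0, 1)" "0 \<notin> {2, 3::nat}" "cex_agg (2, 1) = {2, 3}"
        by (simp_all add: cex_agg_def)
      then have "cex_agg (0, 1) \<noteq> {2, 3}" "cex_agg (2, 1) = {2, 3}"
        by blast+
      then show ?thesis
        by (auto simp: cex_inarcs cex_dispersion_simps)
    qed
    ultimately show ?thesis
      using PAe_in_split[OF PAe singletonI node, of "{2, 3}"] cex_Tin
      by (simp add: cex_flow_def)
  qed
  ultimately show False
    by simp
qed

theorem theorem2:
  shows "(\<forall>(I :: ('n, 'k) mcnd) B x y zin zout.
            mcnd_instance I \<and> partial_aggregation I B \<and> PAe_LP_feasible I B x y zin zout
            \<longrightarrow> PAi_LP_feasible I B x y \<and> pa_obj I B x y = pae_obj I B x y zin zout)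
       \<and> (\<exists>(I :: (nat, nat) mcnd) B x y.
            mcnd_instance I \<and> partial_aggregation I B \<and> PAi_LP_feasible I B x y \<and>
            \<not> (\<exists>zin zout. PAe_LP_feasible I B x y zin zout))"
proof
  show "\<forall>(I :: ('n, 'k) mcnd) B x y zin zout.
          mcnd_instance I \<and> partial_aggregation I B \<and> PAe_LP_feasible I B x y zin zout
          \<longrightarrow> PAi_LP_feasible I B x y \<and> pa_obj I B x y = pae_obj I B x y zin zout"
    using PAe_LP_feasible_imp_PAi_LP_feasible unfolding pae_obj_def by blast
  show "\<exists>(I :: (nat, nat) mcnd) B x y.
          mcnd_instance I \<and> partial_aggregation I B \<and> PAi_LP_feasible I B x y \<and>
          \<not> (\<exists>zin zout. PAe_LP_feasible I B x y zin zout)"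
    using cex_mcnd_instance cex_partial_aggregation cex_PAi_LP_feasible cex_not_PAe_LP_feasible by blast
qed

end
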